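(* Let $n\ge 1$, let $a(x),b(x)\in R_n=\mathbb{F}_2[x]/\langle x^n-1\rangle$, and let $C=\langle a(x)+\omega b(x)\rangle\subseteq\mathbb{F}_4^n$ be the one-generator additive cyclic code they define, with $\dim_{\mathbb{F}_2}(C)=k$. Then there exists a binary quantum stabilizer code, which is a generalized bicycle code, with parameters $[[2n,\,2(n-k),\,d]]$, where $$d\ \ge\ d\big((C^R)^{\perp_s}\setminus C\big)\ \ge\ d\big((C^R)^{\perp_s}\big).$$ In particular, if $C$ is palindromic, i.e. $C=C^R$, then $d\ge d(C^{\perp_s}\setminus C)\ge d(C^{\perp_s})$.
   Context: $\mathbb{F}_4=\{0,1,\omega,\omega^2\}$ with $\omega^2=\omega+1$. Vectors of $\mathbb{F}_4^n$ are written as polynomials $\sum_{i=0}^{n-1}v_ix^i$ with $v_i\in\mathbb{F}_4$, indices modulo $n$; every such vector is uniquely $m(x)+\omega n(x)$ with $m,n\in R_n$ (binary polynomials). An additive code is an $\mathbb{F}_2$-subspace of $\mathbb{F}_4^n$; $\langle a(x)+\omega b(x)\rangle$ denotes the $\mathbb{F}_2$-span of $\{x^i(a(x)+\omega b(x)):0\le i\le n-1\}$ (products computed modulo $x^n-1$). The reciprocal code is $C^R=\langle a(x^{-1})+\omega b(x^{-1})\rangle$, where $x^{-1}=x^{n-1}$ in $R_n$. The symplectic inner product of $(a_i+\omega b_i)_i$ and $(c_i+\omega d_i)_i$ (with $a_i,b_i,c_i,d_i\in\mathbb{F}_2$) is $\sum_i (a_id_i+b_ic_i)\in\mathbb{F}_2$,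 and $D^{\perp_s}$ denotes the set of vectors symplectically orthogonal to all of an additive code $D$. For a set $S$ of vectors, $d(S)$ is the minimum Hamming weight (number of nonzero coordinates) of a nonzero element of $S$. A generalized bicycle (GB) code defined by $a(x),b(x)\in R_n$ is the CSS code on $2n$ qubits whose X-stabilizer group corresponds to $\{(c(x)a(x),c(x)b(x)):c\in R_n\}\subseteq\mathbb{F}_2^{2n}$ and Z-stabilizer group to $\{(c(x)b(x^{-1}),c(x)a(x^{-1})):c\in R_n\}$; an $[[N,K,D]]$ code has $N$ physical qubits, $K$ logical qubits and minimum distance $D$. *)

theory Defs
  imports Main "HOL-Library.Z2" "HOL-Library.Function_Algebras" "HOL-Library.Product_Plus"
    "HOL-Library.Extended_Nat"
begin

text \<open>Binary polynomials in R_n = F_2[x]/(x^n-1) are represented as coefficient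
functions nat => bit that vanish from index n on. A vector m(x) + omega n(x) of F_4^n
is represented by the pair (m, n). A binary vector of F_2^(2n) (2n qubits, as in the
GB code definition) is likewise a pair (u, v) of length-n binary vectors.\<close>

type_synonym bpoly = "nat \<Rightarrow> bit"
type_synonym qvec = "bpoly \<times> bpoly"

definition Rn :: "nat \<Rightarrow> bpoly set" where
  "Rn n = {f. \<forall>i\<ge>n. f i = 0}"

definition cmul :: "nat \<Rightarrow> bpoly \<Rightarrow> bpoly \<Rightarrow> bpoly" where
  "cmul n f g = (\<lambda>i. if i < n then (\<Sum>j<n. f j * g ((i + n - j) mod n)) else 0)"

definition xmono :: "nat \<Rightarrow> nat \<Rightarrow> bpoly" where
  "xmono n i = (\<lambda>j. if j < n \<and> j = i mod n then 1 else 0)"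

text \<open>f(x^{-1}) in R_n, with x^{-1} = x^{n-1}.\<close>
definition recip :: "nat \<Rightarrow> bpoly \<Rightarrow> bpoly" where
  "recip n f = (\<lambda>i. if i < n then f ((n - i) mod n) else 0)"

definition pscale :: "bit \<Rightarrow> qvec \<Rightarrow> qvec" where
  "pscale c p = ((\<lambda>i. c * fst p i), (\<lambda>i. c * snd p i))"

abbreviation span2 :: "qvec set \<Rightarrow> qvec set" where
  "span2 \<equiv> module.span pscale"

abbreviation dim2 :: "qvec set \<Rightarrow> nat" where
  "dim2 \<equiv> vector_space.dim pscale"

definition addcyc :: "nat \<Rightarrow> bpoly \<Rightarrow> bpoly \<Rightarrow> qvec set" where
  "addcyc n a b = span2 {(cmul n (xmono n i) a, cmul n (xmono n i) b) | i. i < n}"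

definition addcyc_recip :: "nat \<Rightarrow> bpoly \<Rightarrow> bpoly \<Rightarrow> qvec set" where
  "addcyc_recip n a b = addcyc n (recip n a) (recip n b)"

definition sympl :: "nat \<Rightarrow> qvec \<Rightarrow> qvec \<Rightarrow> bit" where
  "sympl n p q = (\<Sum>i<n. fst p i * snd q i + snd p i * fst q i)"

definition F4vecs :: "nat \<Rightarrow> qvec set" where
  "F4vecs n = Rn n \<times> Rn n"

definition perp_s :: "nat \<Rightarrow> qvec set \<Rightarrow> qvec set" where
  "perp_s n D = {v \<in> F4vecs n. \<forall>w\<in>D. sympl n v w = 0}"

definition wt4 :: "nat \<Rightarrow> qvec \<Rightarrow> nat" where
  "wt4 n p = card {i. i < n \<and> (fst p i \<noteq> 0 \<or> snd p i \<noteq> 0)}"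

text \<open>Minimum F_4-weight of a nonzero element; Inf of the empty set is infinity.\<close>
definition mind4 :: "nat \<Rightarrow> qvec set \<Rightarrow> enat" where
  "mind4 n S = Inf ((\<lambda>p. enat (wt4 n p)) ` (S - {0}))"

definition bwt :: "nat \<Rightarrow> qvec \<Rightarrow> nat" where
  "bwt n p = card {i. i < n \<and> fst p i \<noteq> 0} + card {i. i < n \<and> snd p i \<noteq> 0}"

definition bdot :: "nat \<Rightarrow> qvec \<Rightarrow> qvec \<Rightarrow> bit" where
  "bdot n p q = (\<Sum>i<n. fst p i * fst q i + snd p i * snd q i)"

definition bdual :: "nat \<Rightarrow> qvec set \<Rightarrow> qvec set" where
  "bdual n S = {v \<in> Rn n \<times> Rn n. \<forall>w\<in>S. bdot n v w = 0}"

definition mind2 :: "nat \<Rightarrow> qvec set \<Rightarrow> enat" where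
  "mind2 n S = Inf ((\<lambda>p. enat (bwt n p)) ` (S - {0}))"

text \<open>The GB code defined by a, b: X- and Z-stabilizer groups (as binary vector spaces).\<close>
definition gbX :: "nat \<Rightarrow> bpoly \<Rightarrow> bpoly \<Rightarrow> qvec set" where
  "gbX n a b = {(cmul n c a, cmul n c b) | c. c \<in> Rn n}"

definition gbZ :: "nat \<Rightarrow> bpoly \<Rightarrow> bpoly \<Rightarrow> qvec set" where
  "gbZ n a b = {(cmul n c (recip n b), cmul n c (recip n a)) | c. c \<in> Rn n}"

text \<open>CSS code parameters on N = 2n qubits: K = N - rank H_X - rank H_Z and
  D = minimum weight of a nontrivial logical operator (X- or Z-type).\<close>
definition css_N :: "nat \<Rightarrow> nat" where
  "css_N n = 2 * n"

definition css_K :: "nat \<Rightarrow> qvec set \<Rightarrow> qvec set \<Rightarrow> nat" where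
  "css_K n SX SZ = css_N n - dim2 SX - dim2 SZ"

definition css_D :: "nat \<Rightarrow> qvec set \<Rightarrow> qvec set \<Rightarrow> enat" where
  "css_D n SX SZ = mind2 n ((bdual n SZ - SX) \<union> (bdual n SX - SZ))"

definition gb_N :: "nat \<Rightarrow> bpoly \<Rightarrow> bpoly \<Rightarrow> nat" where
  "gb_N n a b = css_N n"
definition gb_K :: "nat \<Rightarrow> bpoly \<Rightarrow> bpoly \<Rightarrow> nat" where
  "gb_K n a b = css_K n (gbX n a b) (gbZ n a b)"
definition gb_D :: "nat \<Rightarrow> bpoly \<Rightarrow> bpoly \<Rightarrow> enat" where
  "gb_D n a b = css_D n (gbX n a b) (gbZ n a b)"

end

theory Submission
  imports Defs
begin

text \<open>The F_2-span of the shifts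
x^i (a + omega b) consists of all multiples c (a + omega b), so C is literally the X-stabilizer
group of the GB code of (a, b), and the Z-stabilizer group is the image of C under the involution
(u(x), v(x)) |-> (v(x^-1), u(x^-1)), which preserves the binary dot product and the F_4 weight.
Hence both stabilizer groups have dimension k, and K = 2n - 2k. Binary orthogonality to the
Z-stabilizers is symplectic orthogonality to C^R, so the X-type logical operators are exactly the
elements of (C^R)^perp_s - C, and the involution maps the Z-type logical operators into this set.
Since the F_4 weight of (u, v) is at most its binary weight, D >= d((C^R)^perp_s - C).\<close>

section \<open>Arithmetic in R_n\<close>

lemma sum_fun_apply: "(\<Sum>k\<in>A. (f k :: 'a \<Rightarrow> 'b::comm_monoid_add)) x = (\<Sum>k\<in>A. f k x)"
  by (induction A rule: infinite_finite_induct) auto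

lemma mod_less_double:
  "0 < (n::nat) \<Longrightarrow> x < 2 * n \<Longrightarrow> x mod n = (if x < n then x else x - n)"
  by (simp add: le_mod_geq)

lemma neg_mod_neg_mod: "i < (n::nat) \<Longrightarrow> (n - (n - i) mod n) mod n = i"
  by (cases "i = 0") (auto simp: mod_less_double)

lemma neg_mod_diff: "i < (n::nat) \<Longrightarrow> j < n \<Longrightarrow>
    ((n - i) mod n + n - (n - j) mod n) mod n = (n - (i + n - j) mod n) mod n"
  by (cases "i = 0"; cases "j = 0"; cases "i \<le> j") (auto simp: mod_less_double)

lemma bij_betw_neg_mod: "bij_betw (\<lambda>i::nat. (n - i) mod n) {..<n} {..<n}"
  by (rule bij_betw_byWitness[where f' = "\<lambda>i. (n - i) mod n"]) (auto simp: neg_mod_neg_mod)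

lemma sum_neg_mod_reindex: "(\<Sum>j<n. F ((n - j) mod n)) = (\<Sum>j<(n::nat). F j)"
  using sum.reindex_bij_betw[OF bij_betw_neg_mod, of F] by simp

lemma card_filter_eq_sum: "card {i. i < (n::nat) \<and> Q i} = (\<Sum>i<n. if Q i then 1 else 0)"
proof -
  have "{i. i < n \<and> Q i} = {i\<in>{..<n}. Q i}" by auto
  then show ?thesis using sum.inter_filter[of "{..<n}" "\<lambda>_. 1::nat" Q] by simp
qed

lemma cmul_Rn: "cmul n f g \<in> Rn n"
  by (simp add: cmul_def Rn_def)

lemma recip_Rn: "recip n f \<in> Rn n"
  by (simp add: recip_def Rn_def)

lemma xmono_Rn: "xmono n i \<in> Rn n"
  by (simp add: xmono_def Rn_def)

lemma recip_recip: "f \<in> Rn n \<Longrightarrow> recip n (recip n f) = f"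
  by (rule ext) (auto simp: recip_def Rn_def neg_mod_neg_mod)

lemma recip_cmul: "0 < n \<Longrightarrow> recip n (cmul n f g) = cmul n (recip n f) (recip n g)"
proof (rule ext)
  fix i assume n: "0 < n"
  show "recip n (cmul n f g) i = cmul n (recip n f) (recip n g) i"
  proof (cases "i < n")
    case False then show ?thesis by (simp add: recip_def cmul_def)
  next
    case True
    have "recip n (cmul n f g) i = (\<Sum>j<n. f j * g (((n - i) mod n + n - j) mod n))"
      using True n by (simp add: recip_def cmul_def)
    also have "\<dots>
        = (\<Sum>j<n. f ((n - j) mod n) * g (((n - i) mod n + n - (n - j) mod n) mod n))"
      by (rule sum_neg_mod_reindex[symmetric])
    also have "\<dots> = (\<Sum>j<n. f ((n - j) mod n) * g ((n - (i + n - j) mod n) mod n))"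
      using True by (intro sum.cong refl) (simp add: neg_mod_diff)
    also have "\<dots> = cmul n (recip n f) (recip n g) i"
      using True n by (simp add: recip_def cmul_def)
    finally show ?thesis .
  qed
qed

lemma sum_recip_mult: "(\<Sum>i<n. recip n u i * recip n w i) = (\<Sum>i<n. u i * w i)"
  unfolding recip_def using sum_neg_mod_reindex[of "\<lambda>i. u i * w i" n] by simp

lemma card_recip:
  "card {i. i < n \<and> P (recip n u i) (recip n w i)} = card {i. i < n \<and> P (u i) (w i)}"
proof -
  have "card {i. i < n \<and> P (recip n u i) (recip n w i)}
      = card {i. i < n \<and> P (u ((n - i) mod n)) (w ((n - i) mod n))}"
    by (rule arg_cong[where f = card]) (auto simp: recip_def)
  also have "\<dots> = card {i. i < n \<and> P (u i) (w i)}"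
    unfolding card_filter_eq_sum by (rule sum_neg_mod_reindex)
  finally show ?thesis .
qed

(* Keep + and * on bit as ring operations, so that algebra_simps applies. *)
declare add_bit_eq_xor[simp del] mult_bit_eq_and[simp del]

lemma cmul_add_left: "cmul n (c + d) a = cmul n c a + cmul n d a"
  by (rule ext) (simp add: cmul_def algebra_simps sum.distrib)

lemma cmul_scale_left: "cmul n (\<lambda>i. s * c i) a = (\<lambda>i. s * cmul n c a i)"
  by (rule ext) (simp add: cmul_def algebra_simps sum_distrib_left)

lemma cmul_xmono:
  assumes "i < n"
  shows "cmul n (xmono n i) a k = (if k < n then a ((k + n - i) mod n) else 0)"
proof -
  have "(\<Sum>j<n. xmono n i j * a ((k + n - j) mod n))
      = (\<Sum>j<n. if j = i then a ((k + n - j) mod n) else 0)"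
    using assms by (intro sum.cong refl) (auto simp: xmono_def)
  also have "\<dots> = a ((k + n - i) mod n)"
    using assms by (simp add: sum.delta)
  finally show ?thesis by (simp add: cmul_def)
qed

lemma cmul_eq_sum_xmono:
  "c \<in> Rn n \<Longrightarrow> cmul n c a = (\<Sum>i<n. (\<lambda>k. c i * cmul n (xmono n i) a k))"
  by (rule ext) (simp add: sum_fun_apply cmul_xmono, simp add: cmul_def)

section \<open>The code C as the X-stabilizer group\<close>

lemma vector_space_pscale: "vector_space pscale"
  by unfold_locales (auto simp: pscale_def algebra_simps)

interpretation V: vector_space pscale
  by (rule vector_space_pscale)

lemma gbX_subspace: "V.subspace (gbX n a b)"
proof (unfold V.subspace_def, intro conjI ballI allI)
  show "0 \<in> gbX n a b"
    by (auto simp: gbX_def cmul_def Rn_def zero_prod_def intro!: exI[of _ 0])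
next
  fix x y assume "x \<in> gbX n a b" "y \<in> gbX n a b"
  then obtain c d where "c \<in> Rn n" "d \<in> Rn n"
    and "x = (cmul n c a, cmul n c b)" "y = (cmul n d a, cmul n d b)"
    by (auto simp: gbX_def)
  then show "x + y \<in> gbX n a b"
    by (auto simp: gbX_def cmul_add_left Rn_def intro!: exI[of _ "c + d"])
next
  fix s x assume "x \<in> gbX n a b"
  then obtain c where "c \<in> Rn n" "x = (cmul n c a, cmul n c b)"
    by (auto simp: gbX_def)
  then show "pscale s x \<in> gbX n a b"
    by (auto simp: gbX_def cmul_scale_left Rn_def pscale_def intro!: exI[of _ "\<lambda>i. s * c i"])
qed

lemma addcyc_eq_gbX: "addcyc n a b = gbX n a b"
proof
  show "addcyc n a b \<subseteq> gbX n a b"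
    unfolding addcyc_def
    by (rule V.span_minimal[OF _ gbX_subspace]) (auto simp: gbX_def intro: xmono_Rn)
next
  show "gbX n a b \<subseteq> addcyc n a b"
  proof
    fix x assume "x \<in> gbX n a b"
    then obtain c where c: "c \<in> Rn n" "x = (cmul n c a, cmul n c b)"
      by (auto simp: gbX_def)
    have "x = (\<Sum>i<n. pscale (c i) (cmul n (xmono n i) a, cmul n (xmono n i) b))"
      using c by (simp add: sum_prod pscale_def cmul_eq_sum_xmono[of c n a]
          cmul_eq_sum_xmono[of c n b])
    also have "\<dots> \<in> addcyc n a b"
      unfolding addcyc_def by (intro V.span_sum V.span_scale V.span_base) auto
    finally show "x \<in> addcyc n a b" .
  qed
qed

section \<open>The Z-stabilizer group as a reflected copy of C\<close>

definition swap_recip :: "nat \<Rightarrow> qvec \<Rightarrow> qvec" where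
  "swap_recip n p = (recip n (snd p), recip n (fst p))"

lemma swap_recip_swap_recip: "p \<in> Rn n \<times> Rn n \<Longrightarrow> swap_recip n (swap_recip n p) = p"
  by (auto simp: swap_recip_def recip_recip)

lemma swap_recip_zero: "swap_recip n 0 = 0"
  by (auto simp: swap_recip_def recip_def zero_prod_def)

lemma swap_recip_linear: "Vector_Spaces.linear pscale pscale (swap_recip n)"
proof -
  have "recip n (f + g) = recip n f + recip n g" "recip n (\<lambda>i. s * f i) = (\<lambda>i. s * recip n f i)"
    for f g s by (auto simp: recip_def)
  then show ?thesis
    unfolding Vector_Spaces.linear_iff by (auto simp: vector_space_pscale swap_recip_def pscale_def)
qed

lemma swap_recip_gbX:
  assumes "0 < n"
  shows "swap_recip n ` gbX n a b = gbZ n a b"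
proof
  show "swap_recip n ` gbX n a b \<subseteq> gbZ n a b"
    using assms by (auto simp: gbX_def gbZ_def swap_recip_def recip_cmul recip_Rn)
next
  show "gbZ n a b \<subseteq> swap_recip n ` gbX n a b"
  proof
    fix z assume "z \<in> gbZ n a b"
    then obtain c where "c \<in> Rn n" "z = (cmul n c (recip n b), cmul n c (recip n a))"
      by (auto simp: gbZ_def)
    then have "z = swap_recip n (cmul n (recip n c) a, cmul n (recip n c) b)"
      using assms by (simp add: swap_recip_def recip_cmul recip_recip)
    moreover have "(cmul n (recip n c) a, cmul n (recip n c) b) \<in> gbX n a b"
      by (auto simp: gbX_def recip_Rn)
    ultimately show "z \<in> swap_recip n ` gbX n a b"
      by blast
  qed
qed

lemma (in vector_space_pair) dim_inj_image:
  assumes "Vector_Spaces.linear s1 s2 f" and "inj_on f (vs1.span S)"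
  shows "vs2.dim (f ` S) = vs1.dim S"
proof -
  interpret f: Vector_Spaces.linear s1 s2 f by fact
  obtain B where B: "B \<subseteq> S" "vs1.independent B" "S \<subseteq> vs1.span B" "card B = vs1.dim S"
    using vs1.basis_exists[of S] by auto
  have span_S: "vs1.span S = vs1.span B"
    using B vs1.span_mono[of B S] vs1.span_mono[of S "vs1.span B"] vs1.span_span[of B] by auto
  have inj_B: "inj_on f (vs1.span B)"
    using assms(2) span_S by simp
  have "vs2.dim (f ` S) = vs2.dim (f ` vs1.span B)"
    by (metis f.span_image span_S vs2.dim_span)
  also have "\<dots> = vs2.dim (f ` B)"
    by (metis f.span_image vs2.dim_span)
  also have "\<dots> = card (f ` B)"
    using f.independent_injective_image[OF B(2) inj_B] by (rule vs2.dim_eq_card_independent)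
  also have "\<dots> = card B"
    using inj_B vs1.span_superset by (intro card_image inj_on_subset[OF inj_B]) auto
  finally show ?thesis using B(4) by simp
qed

lemma dim_gbZ:
  assumes "0 < n"
  shows "dim2 (gbZ n a b) = dim2 (gbX n a b)"
proof -
  have "inj_on (swap_recip n) (span2 (gbX n a b))"
    unfolding V.span_eq_iff[THEN iffD2, OF gbX_subspace]
    by (rule inj_on_inverseI[where g = "swap_recip n"])
      (auto simp: gbX_def cmul_Rn swap_recip_swap_recip)
  moreover have "vector_space_pair pscale pscale"
    by (simp add: vector_space_pair_def vector_space_pscale)
  ultimately show ?thesis
    using vector_space_pair.dim_inj_image[OF _ swap_recip_linear] swap_recip_gbX[OF assms] by metis
qed

section \<open>Logical operators and weights\<close>

lemma wt4_le_bwt: "wt4 n p \<le> bwt n p"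
proof -
  have "{i. i < n \<and> (fst p i \<noteq> 0 \<or> snd p i \<noteq> 0)}
      = {i. i < n \<and> fst p i \<noteq> 0} \<union> {i. i < n \<and> snd p i \<noteq> 0}"
    by auto
  then show ?thesis
    unfolding wt4_def bwt_def by (simp add: card_Un_le)
qed

lemma wt4_swap_recip: "wt4 n (swap_recip n p) = wt4 n p"
  using card_recip[of n "\<lambda>x y. x \<noteq> 0 \<or> y \<noteq> 0" "snd p" "fst p"]
  by (simp add: wt4_def swap_recip_def disj_commute)

lemma bdot_swap_recip: "bdot n (swap_recip n p) (swap_recip n q) = bdot n p q"
  by (simp add: bdot_def swap_recip_def sum.distrib sum_recip_mult add.commute)

lemma bdual_gbZ_eq_perp_s: "bdual n (gbZ n a b) = perp_s n (gbX n (recip n a) (recip n b))"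
  by (auto simp: bdual_def perp_s_def F4vecs_def gbZ_def gbX_def bdot_def sympl_def)

lemma swap_recip_Z_logical:
  assumes "0 < n" and "v \<in> bdual n (gbX n a b) - gbZ n a b"
  shows "swap_recip n v \<in> bdual n (gbZ n a b) - gbX n a b"
proof -
  have v: "v \<in> Rn n \<times> Rn n"
    using assms(2) by (simp add: bdual_def)
  have "bdot n (swap_recip n v) z = 0" if "z \<in> gbZ n a b" for z
  proof -
    obtain x where "x \<in> gbX n a b" "z = swap_recip n x"
      using \<open>z \<in> gbZ n a b\<close> swap_recip_gbX[OF assms(1)] by blast
    then show ?thesis
      using assms(2) by (simp add: bdot_swap_recip bdual_def)
  qed
  moreover have "swap_recip n v \<notin> gbX n a b"
  proof
    assume "swap_recip n v \<in> gbX n a b"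
    then have "v \<in> gbZ n a b"
      using swap_recip_gbX[OF assms(1)] swap_recip_swap_recip[OF v] by (metis image_eqI)
    with assms(2) show False
      by simp
  qed
  ultimately show ?thesis
    by (simp add: bdual_def swap_recip_def recip_Rn)
qed

lemma mind4_le_mind2:
  assumes "\<And>v. v \<in> S \<Longrightarrow> v \<noteq> 0 \<Longrightarrow> \<exists>w\<in>T. w \<noteq> 0 \<and> wt4 n w \<le> bwt n v"
  shows "mind4 n T \<le> mind2 n S"
  unfolding mind4_def mind2_def
proof (rule Inf_greatest)
  fix x assume "x \<in> (\<lambda>p. enat (bwt n p)) ` (S - {0})"
  then obtain v where v: "v \<in> S" "v \<noteq> 0" "x = enat (bwt n v)"
    by blast
  with assms obtain w where "w \<in> T - {0}" "wt4 n w \<le> bwt n v"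
    by blast
  then show "Inf ((\<lambda>p. enat (wt4 n p)) ` (T - {0})) \<le> x"
    using v(3) by (auto intro: INF_lower2)
qed

lemma mind4_X_logicals_le_gb_D:
  assumes "0 < n"
  shows "mind4 n (bdual n (gbZ n a b) - gbX n a b) \<le> gb_D n a b"
  unfolding gb_D_def css_D_def
proof (rule mind4_le_mind2)
  fix v
  assume "v \<in> (bdual n (gbZ n a b) - gbX n a b) \<union> (bdual n (gbX n a b) - gbZ n a b)"
    and "v \<noteq> 0"
  then consider "v \<in> bdual n (gbZ n a b) - gbX n a b" | "v \<in> bdual n (gbX n a b) - gbZ n a b"
    by blast
  then show "\<exists>w\<in>bdual n (gbZ n a b) - gbX n a b. w \<noteq> 0 \<and> wt4 n w \<le> bwt n v"
  proof cases
    case 1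
    then show ?thesis
      using \<open>v \<noteq> 0\<close> wt4_le_bwt by blast
  next
    case 2
    then have "v \<in> Rn n \<times> Rn n"
      by (simp add: bdual_def)
    then have "swap_recip n v \<noteq> 0"
      using \<open>v \<noteq> 0\<close> swap_recip_swap_recip swap_recip_zero by metis
    then show ?thesis
      using swap_recip_Z_logical[OF assms 2] wt4_swap_recip wt4_le_bwt by metis
  qed
qed

lemma mind4_mono_diff: "mind4 n A \<le> mind4 n (A - B)"
  unfolding mind4_def by (intro Inf_superset_mono image_mono) blast

theorem theorem2:
  fixes n :: nat and a b :: bpoly
  assumes "n \<ge> 1" and "a \<in> Rn n" and "b \<in> Rn n"
  shows "let C = addcyc n a b; CR = addcyc_recip n a b; k = dim2 C in
    (\<exists>a' b'. a' \<in> Rn n \<and> b' \<in> Rn n \<and>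
        gb_N n a' b' = 2 * n \<and> gb_K n a' b' = 2 * (n - k) \<and>
        gb_D n a' b' \<ge> mind4 n (perp_s n CR - C) \<and>
        (C = CR \<longrightarrow> gb_D n a' b' \<ge> mind4 n (perp_s n C - C))) \<and>
    mind4 n (perp_s n CR - C) \<ge> mind4 n (perp_s n CR) \<and>
    (C = CR \<longrightarrow> mind4 n (perp_s n C - C) \<ge> mind4 n (perp_s n C))"
proof -
  have n: "0 < n"
    using assms(1) by simp
  have K: "gb_K n a b = 2 * (n - dim2 (addcyc n a b))"
    unfolding gb_K_def css_K_def css_N_def addcyc_eq_gbX dim_gbZ[OF n] by simp
  have D: "mind4 n (perp_s n (addcyc_recip n a b) - addcyc n a b) \<le> gb_D n a b"
    using mind4_X_logicals_le_gb_D[OF n]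
    unfolding addcyc_recip_def addcyc_eq_gbX bdual_gbZ_eq_perp_s .
  show ?thesis
    unfolding Let_def
    using assms(2,3) K D mind4_mono_diff
    by (intro conjI impI exI[of _ a] exI[of _ b]) (simp_all add: gb_N_def css_N_def)
qed

end
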